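(* Let $x$ and $y$ be finite sequences of strings and $\lambda\ge0$. For every valid labeled summary tree $T$ representing $x$ and $y$, $\mathsf{EDG}(x,y,\lambda)\le\mathrm{error}_\lambda(T)$.
   Context: Strings are over a finite alphabet; $\varepsilon$ is the empty string and $\mathsf{ED}$ is Levenshtein edit distance (unit costs). $\mathsf{AED}(x,y)$ for string sequences is the minimum cost of transforming $x$ into $y$ using only inserting a string $w$ into $x$ (cost $\mathsf{ED}(w,\varepsilon)$) and substituting a string $w$ of $x$ by $w'$ (cost $\mathsf{ED}(w,w')$), with no deletions (defined only if $|x|\le|y|$). A labeled summary tree of $\{x,y\}$ is a rooted tree $T$ with a sentinel root, other nodes labeled by strings, with $x$ and $y$ assigned to nodes $v_x,v_y$; $L_T(v)$ is the label sequence on the root-to-$v$ path excluding the sentinel; $|T|$ counts non-sentinel nodes. It is valid if $|x|\le|L_T(v_x)|$ and $|y|\le|L_T(v_y)|$, and $\mathrm{error}_\lambda(T)=\mathsf{AED}(x,L_T(v_x))+\mathsf{AED}(y,L_T(v_y))+\lambda|T|$. $\mathsf{EDG}(i,j,\lambda)$ ($1\le i\le|x|+1$, $1\le j\le|y|+1$): $\mathsf{EDG}(|x|+1,|y|+1,\lambda)=0$, $\mathsf{EDG}(i,|y|+1,\lambda)=\lambda(|x|-i+1)$, $\mathsf{EDG}(|x|+1,j,\lambda)=\lambda(|y|-j+1)$, and otherwise the minimum of $\mathsf{EDG}(i+1,j+1,\lambda)+\lambda+\mathsf{ED}(x_i,y_j)$, $\mathsf{EDG}(i,j+1,\lambda)+\lambda+\mathsf{ED}(\varepsilon,y_j)$,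 $\mathsf{EDG}(i+1,j,\lambda)+\lambda+\mathsf{ED}(x_i,\varepsilon)$, and $\lambda(|x|-i+1)+\lambda(|y|-j+1)$; $\mathsf{EDG}(x,y,\lambda)=\mathsf{EDG}(1,1,\lambda)$. *)

theory Defs
  imports Complex_Main
begin

fun ED :: "'a list \<Rightarrow> 'a list \<Rightarrow> nat" where
  "ED [] ys = length ys"
| "ED xs [] = length xs"
| "ED (a # xs) (b # ys) =
     min (min (ED xs ys + (if a = b then 0 else 1)) (ED xs (b # ys) + 1)) (ED (a # xs) ys + 1)"

inductive aed_reach :: "'a list list \<Rightarrow> 'a list list \<Rightarrow> nat \<Rightarrow> bool" where
  refl: "aed_reach x x 0"
| ins: "aed_reach x z c \<Longrightarrow> i \<le> length z \<Longrightarrow>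
          aed_reach x (take i z @ [w] @ drop i z) (c + ED w [])"
| subst: "aed_reach x z c \<Longrightarrow> i < length z \<Longrightarrow>
          aed_reach x (z[i := w']) (c + ED (z ! i) w')"

definition AED :: "'a list list \<Rightarrow> 'a list list \<Rightarrow> nat" where
  "AED x y = (LEAST c. aed_reach x y c)"

(* Labeled summary tree: sentinel root r, non-sentinel nodes N, parent function par,
   labels lab.  root_path v ps: ps is the list of non-sentinel nodes on the path
   from the root to v (excluding the sentinel). *)
inductive root_path :: "'v \<Rightarrow> 'v set \<Rightarrow> ('v \<Rightarrow> 'v) \<Rightarrow> 'v \<Rightarrow> 'v list \<Rightarrow> bool"
  for r N par where
  root: "root_path r N par r []"
| step: "v \<in> N \<Longrightarrow> root_path r N par (par v) ps \<Longrightarrow> root_path r N par v (ps @ [v])"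

definition is_rooted_tree :: "'v \<Rightarrow> 'v set \<Rightarrow> ('v \<Rightarrow> 'v) \<Rightarrow> bool" where
  "is_rooted_tree r N par \<longleftrightarrow> finite N \<and> r \<notin> N \<and> (\<forall>v\<in>N. par v \<in> insert r N)
     \<and> (\<forall>v\<in>N. \<exists>ps. root_path r N par v ps)"

definition L_T :: "'v \<Rightarrow> 'v set \<Rightarrow> ('v \<Rightarrow> 'v) \<Rightarrow> ('v \<Rightarrow> 'a list) \<Rightarrow> 'v \<Rightarrow> 'a list list" where
  "L_T r N par lab v = map lab (THE ps. root_path r N par v ps)"

definition valid_summary_tree ::
  "'v \<Rightarrow> 'v set \<Rightarrow> ('v \<Rightarrow> 'v) \<Rightarrow> ('v \<Rightarrow> 'a list) \<Rightarrow> 'v \<Rightarrow> 'v \<Rightarrow>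
   'a list list \<Rightarrow> 'a list list \<Rightarrow> bool" where
  "valid_summary_tree r N par lab vx vy x y \<longleftrightarrow>
     is_rooted_tree r N par \<and> vx \<in> insert r N \<and> vy \<in> insert r N \<and>
     length x \<le> length (L_T r N par lab vx) \<and> length y \<le> length (L_T r N par lab vy)"

definition error_T ::
  "real \<Rightarrow> 'v \<Rightarrow> 'v set \<Rightarrow> ('v \<Rightarrow> 'v) \<Rightarrow> ('v \<Rightarrow> 'a list) \<Rightarrow> 'v \<Rightarrow> 'v \<Rightarrow>
   'a list list \<Rightarrow> 'a list list \<Rightarrow> real" where
  "error_T lam r N par lab vx vy x y =
     real (AED x (L_T r N par lab vx)) + real (AED y (L_T r N par lab vy)) + lam * real (card N)"

(* EDG(i,j,lam) on suffixes: edg (drop (i-1) x) (drop (j-1) y) lam = EDG(i,j,lam) *)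
fun edg :: "'a list list \<Rightarrow> 'a list list \<Rightarrow> real \<Rightarrow> real" where
  "edg [] [] lam = 0"
| "edg xs [] lam = lam * real (length xs)"
| "edg [] ys lam = lam * real (length ys)"
| "edg (a # xs) (b # ys) lam =
     min (min (edg xs ys lam + lam + real (ED a b))
              (edg (a # xs) ys lam + lam + real (ED [] b)))
         (min (edg xs (b # ys) lam + lam + real (ED a []))
              (lam * real (length (a # xs)) + lam * real (length (b # ys))))"

definition EDG :: "'a list list \<Rightarrow> 'a list list \<Rightarrow> real \<Rightarrow> real" where
  "EDG x y lam = edg x y lam"

end

theory Submission imports Defs begin

text \<open>
  The root paths of \<open>v\<^sub>x\<close> and \<open>v\<^sub>y\<close> share a prefix \<open>C\<close> (the path to their lowest common
  ancestor) and then continue along disjoint tails \<open>A\<close> and \<open>B\<close>; all these nodes are distinct,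
  so \<open>|C| + |A| + |B| \<le> |T|\<close>. A transformation of \<open>x\<close> into \<open>L\<^sub>T(v\<^sub>x)\<close> yields an alignment
  in which every label is either matched with an element of \<open>x\<close> (paying their edit distance)
  or left unmatched (paying its length), at no larger cost: an insertion adds an unmatched
  label, and by the triangle inequality for \<open>ED\<close> a substitution raises the alignment cost by
  at most its own cost. Walking down \<open>C\<close>, the two alignments' choices at a
  shared label \<open>l\<close> dictate an \<open>EDG\<close> move costing \<open>\<lambda>\<close> plus at most what the alignments pay
  for \<open>l\<close>: a match of \<open>x\<^sub>i\<close> and \<open>y\<^sub>j\<close> costs \<open>ED(x\<^sub>i,y\<^sub>j) \<le> ED(x\<^sub>i,l) + ED(l,y\<^sub>j)\<close>, a one-sided
  match is a deletion costing \<open>|x\<^sub>i| \<le> ED(x\<^sub>i,l) + |l|\<close>, and a double skip needs no move. Once the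
  paths fork, the remaining elements are paid for by the last alternative of the recursion,
  at most \<open>\<lambda>(|A| + |B|)\<close>.
\<close>

section \<open>Edit distance\<close>

lemma ED_Nil2 [simp]: "ED xs [] = length xs"
  by (cases xs) auto

lemma ED_self [simp]: "ED xs xs = 0"
  by (induction xs) auto

lemma ED_sym: "ED xs ys = ED ys xs"
  by (induction xs ys rule: ED.induct) (auto simp: min.commute min.left_commute)

lemma ED_le_length_add: "ED xs ys \<le> length xs + length ys"
  by (induction xs ys rule: ED.induct) auto

lemma length_le_ED_add_left: "length xs \<le> ED xs ys + length ys"
  by (induction xs ys rule: ED.induct) auto

lemma length_le_ED_add_right: "length ys \<le> ED xs ys + length xs"
  by (induction xs ys rule: ED.induct) auto

lemma ED_Cons_Cons_cases:
  "ED (a # xs) (b # ys) = ED xs ys + (if a = b then 0 else 1)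
   \<or> ED (a # xs) (b # ys) = ED xs (b # ys) + 1 \<or> ED (a # xs) (b # ys) = ED (a # xs) ys + 1"
  by (auto simp: min_def)

lemma ED_triangle: "ED xs zs \<le> ED xs ys + ED ys zs"
proof (induction "length xs + length ys + length zs" arbitrary: xs ys zs rule: less_induct)
  case less
  show ?case
  proof (cases "xs = [] \<or> ys = [] \<or> zs = []")
    case True
    then show ?thesis
      using length_le_ED_add_right[where xs = ys and ys = zs] ED_le_length_add[of xs zs]
        length_le_ED_add_left[of xs ys] by auto
  next
    case False
    then obtain a b c xs' ys' zs' where
      xs: "xs = a # xs'" and ys: "ys = b # ys'" and zs: "zs = c # zs'"
      by (meson neq_Nil_conv)
    text \<open>Whichever recursive alternative realises \<open>ED xs ys\<close> and \<open>ED ys zs\<close>, one of the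
      alternatives bounding \<open>ED xs zs\<close> closes the gap by the induction hypothesis.\<close>
    have IH: "ED xs' zs \<le> ED xs' ys + ED ys zs" "ED xs zs' \<le> ED xs ys + ED ys zs'"
      "ED xs' zs' \<le> ED xs' ys' + ED ys' zs'" "ED xs' zs \<le> ED xs' ys' + ED ys' zs"
      "ED xs zs' \<le> ED xs ys' + ED ys' zs'" "ED xs zs \<le> ED xs ys' + ED ys' zs"
      by (rule less; simp add: xs ys zs)+
    moreover have "ED xs zs \<le> ED xs' zs' + (if a = c then 0 else 1)"
      "ED xs zs \<le> ED xs' zs + 1" "ED xs zs \<le> ED xs zs' + 1"
      using xs zs by auto
    moreover have
      "ED xs ys = ED xs' ys' + (if a = b then 0 else 1) \<or> ED xs ys = ED xs' ys + 1
       \<or> ED xs ys = ED xs ys' + 1"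
      "ED ys zs = ED ys' zs' + (if b = c then 0 else 1) \<or> ED ys zs = ED ys' zs + 1
       \<or> ED ys zs = ED ys zs' + 1"
      unfolding xs ys zs by (rule ED_Cons_Cons_cases)+
    ultimately show ?thesis
      by (auto split: if_splits)
  qed
qed

section \<open>Alignments\<close>

inductive align :: "'a list list \<Rightarrow> 'a list list \<Rightarrow> nat \<Rightarrow> bool" where
  align_Nil: "align [] [] 0"
| align_match: "align xs L c \<Longrightarrow> align (a # xs) (b # L) (c + ED a b)"
| align_skip: "align xs L c \<Longrightarrow> align xs (b # L) (c + length b)"

lemma align_ConsE:
  assumes "align xs (b # L) c"
  obtains (match) a xs' c' where "xs = a # xs'" "align xs' L c'" "c = c' + ED a b"
    | (skip) c' where "align xs L c'" "c = c' + length b"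
  using assms by (cases rule: align.cases) auto

lemma align_self: "align xs xs 0"
proof (induction xs)
  case Nil
  then show ?case by (rule align_Nil)
next
  case (Cons a xs)
  then show ?case using align_match[of xs xs 0 a a] by simp
qed

lemma align_length_le: "align xs L c \<Longrightarrow> length xs \<le> length L"
  by (induction rule: align.induct) auto

lemma align_insert:
  "align xs L c \<Longrightarrow> i \<le> length L \<Longrightarrow> align xs (take i L @ [w] @ drop i L) (c + length w)"
proof (induction arbitrary: i rule: align.induct)
  case align_Nil
  then show ?case using align_skip[OF align.align_Nil, of w] by simp
next
  case (align_match xs L c a b)
  show ?case
  proof (cases i)
    case 0
    then show ?thesis
      using align_skip[OF align.align_match[OF align_match.hyps], where b = w] by simp
  next
    case (Suc j)
    then show ?thesis
      using align_match align.align_match by (fastforce simp: algebra_simps)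
  qed
next
  case (align_skip xs L c b)
  show ?case
  proof (cases i)
    case 0
    then show ?thesis
      using align.align_skip[OF align.align_skip[OF align_skip.hyps], where b = w] by simp
  next
    case (Suc j)
    then show ?thesis
      using align_skip align.align_skip by (fastforce simp: algebra_simps)
  qed
qed

lemma align_update:
  "align xs L c \<Longrightarrow> i < length L \<Longrightarrow> \<exists>c' \<le> c + ED (L ! i) w. align xs (L[i := w]) c'"
proof (induction arbitrary: i rule: align.induct)
  case align_Nil
  then show ?case by simp
next
  case (align_match xs L c a b)
  show ?case
  proof (cases i)
    case 0
    have "align (a # xs) ((b # L)[i := w]) (c + ED a w)"
      using 0 align.align_match[OF align_match.hyps] by simp
    moreover have "ED a w \<le> ED a b + ED b w"
      by (rule ED_triangle)
    ultimately show ?thesis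
      using 0 by (auto intro!: exI[of _ "c + ED a w"])
  next
    case (Suc j)
    then obtain c' where "c' \<le> c + ED (L ! j) w" "align xs (L[j := w]) c'"
      using align_match.IH[of j] align_match.prems by auto
    then show ?thesis
      using Suc align.align_match[of xs "L[j := w]" c' a b] by (auto intro!: exI[of _ "c' + ED a b"])
  qed
next
  case (align_skip xs L c b)
  show ?case
  proof (cases i)
    case 0
    have "align xs ((b # L)[i := w]) (c + length w)"
      using 0 align.align_skip[OF align_skip.hyps] by simp
    moreover have "length w \<le> ED b w + length b"
      by (rule length_le_ED_add_right)
    ultimately show ?thesis
      using 0 by (auto intro!: exI[of _ "c + length w"])
  next
    case (Suc j)
    then obtain c' where "c' \<le> c + ED (L ! j) w" "align xs (L[j := w]) c'"
      using align_skip.IH[of j] align_skip.prems by auto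
    then show ?thesis
      using Suc align.align_skip[of xs "L[j := w]" c' b] by (auto intro!: exI[of _ "c' + length b"])
  qed
qed

lemma aed_reach_align: "aed_reach xs L c \<Longrightarrow> \<exists>c' \<le> c. align xs L c'"
proof (induction rule: aed_reach.induct)
  case (refl xs)
  then show ?case using align_self by blast
next
  case (ins xs L c i w)
  then obtain c' where "c' \<le> c" "align xs L c'" by blast
  then show ?case
    using align_insert[of xs L c' i w] ins.hyps(2) by (auto intro!: exI[of _ "c' + length w"])
next
  case (subst xs L c i w)
  then obtain c' where "c' \<le> c" "align xs L c'" by blast
  moreover obtain c'' where "c'' \<le> c' + ED (L ! i) w" "align xs (L[i := w]) c''"
    using align_update[OF \<open>align xs L c'\<close> subst.hyps(2)] by blast
  ultimately show ?case
    by (auto intro!: exI[of _ c''])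
qed

lemma aed_reach_Cons: "aed_reach xs L c \<Longrightarrow> aed_reach (a # xs) (a # L) c"
proof (induction rule: aed_reach.induct)
  case (refl xs)
  then show ?case by (rule aed_reach.refl)
next
  case (ins xs L c i w)
  then show ?case using aed_reach.ins[of "a # xs" "a # L" c "Suc i" w] by simp
next
  case (subst xs L c i w)
  then show ?case using aed_reach.subst[of "a # xs" "a # L" c "Suc i" w] by simp
qed

lemma aed_reach_exists: "length xs \<le> length L \<Longrightarrow> \<exists>c. aed_reach xs L c"
proof (induction L arbitrary: xs)
  case Nil
  then show ?case using aed_reach.refl by fastforce
next
  case (Cons b L)
  show ?case
  proof (cases xs)
    case Nil
    then obtain c where "aed_reach xs L c" using Cons by fastforce
    then show ?thesis using aed_reach.ins[of xs L c 0 b] by auto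
  next
    case (Cons a xs')
    then obtain c where "aed_reach xs' L c" using Cons.IH Cons.prems by fastforce
    then have "aed_reach xs (a # L) c" using aed_reach_Cons Cons by blast
    then show ?thesis using aed_reach.subst[of xs "a # L" c 0 b] by auto
  qed
qed

lemma align_le_AED:
  assumes "length xs \<le> length L"
  obtains c where "c \<le> AED xs L" and "align xs L c"
proof -
  obtain c where "aed_reach xs L c"
    using aed_reach_exists[OF assms] by blast
  then have "aed_reach xs L (AED xs L)"
    unfolding AED_def by (rule LeastI)
  then show ?thesis
    using aed_reach_align that by blast
qed

section \<open>The gap edit distance\<close>

lemma edg_Nil2 [simp]: "edg xs [] lam = lam * real (length xs)"
  by (cases xs) auto

lemma edg_Nil1 [simp]: "edg [] ys lam = lam * real (length ys)"
  by (cases ys) auto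

lemma edg_le_lengths: "edg xs ys lam \<le> lam * real (length xs) + lam * real (length ys)"
  by (cases "(xs, ys, lam)" rule: edg.cases) auto

lemma edg_Cons_Cons_le: "edg (a # xs) (b # ys) lam \<le> edg xs ys lam + lam + real (ED a b)"
  by simp

lemma edg_Cons1_le: "edg (a # xs) ys lam \<le> edg xs ys lam + lam + real (length a)"
  by (cases ys) (auto simp: algebra_simps)

lemma edg_Cons2_le: "edg xs (b # ys) lam \<le> edg xs ys lam + lam + real (length b)"
  by (cases xs) (auto simp: algebra_simps)

lemma edg_align_Cons_step:
  assumes "lam \<ge> 0" and "align xs (p # L) c1" and "align ys (p # M) c2"
  obtains xs' ys' c1' c2' where "align xs' L c1'" and "align ys' M c2'"
    and "edg xs ys lam + real c1' + real c2' \<le> edg xs' ys' lam + real c1 + real c2 + lam"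
  using assms(2)
proof (cases rule: align_ConsE)
  case x: (match a xs' c1')
  from assms(3) show ?thesis
  proof (cases rule: align_ConsE)
    case y: (match b ys' c2')
    have "ED a b \<le> ED a p + ED b p"
      using ED_triangle[of a b p] ED_sym[of p b] by simp
    then show ?thesis
      using that[OF x(2) y(2)] edg_Cons_Cons_le[of a xs' b ys' lam] x y by simp
  next
    case y: (skip c2')
    have "length a \<le> ED a p + length p"
      by (rule length_le_ED_add_left)
    then show ?thesis
      using that[OF x(2) y(1)] edg_Cons1_le[of a xs' ys lam] x y by simp
  qed
next
  case x: (skip c1')
  from assms(3) show ?thesis
  proof (cases rule: align_ConsE)
    case y: (match b ys' c2')
    have "length b \<le> ED b p + length p"
      by (rule length_le_ED_add_left)
    then show ?thesis
      using that[OF x(1) y(2)] edg_Cons2_le[of xs b ys' lam] x y by simp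
  next
    case y: (skip c2')
    then show ?thesis
      using that[OF x(1) y(1)] x assms(1) by simp
  qed
qed

lemma edg_le_align_costs:
  assumes "lam \<ge> 0" and "align xs (C @ A) c1" and "align ys (C @ B) c2"
  shows "edg xs ys lam \<le> real c1 + real c2 + lam * real (length C + length A + length B)"
  using assms(2,3)
proof (induction C arbitrary: xs ys c1 c2)
  case Nil
  have "edg xs ys lam \<le> lam * real (length xs) + lam * real (length ys)"
    by (rule edg_le_lengths)
  also have "\<dots> \<le> lam * real (length A) + lam * real (length B)"
    using align_length_le[OF Nil(1)] align_length_le[OF Nil(2)] assms(1)
    by (intro add_mono mult_left_mono) auto
  finally show ?case
    by (simp add: algebra_simps)
next
  case (Cons p C)
  then have "align xs (p # C @ A) c1" and "align ys (p # C @ B) c2"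
    by simp_all
  then obtain xs' ys' c1' c2' where "align xs' (C @ A) c1'" "align ys' (C @ B) c2'"
    and "edg xs ys lam + real c1' + real c2' \<le> edg xs' ys' lam + real c1 + real c2 + lam"
    using edg_align_Cons_step[OF assms(1)] by metis
  then show ?case
    using Cons.IH by (fastforce simp: algebra_simps)
qed

section \<open>Root paths\<close>

lemma root_path_unique:
  "root_path r N par v ps \<Longrightarrow> r \<notin> N \<Longrightarrow> root_path r N par v qs \<Longrightarrow> ps = qs"
proof (induction arbitrary: qs rule: root_path.induct)
  case root
  from root(2) show ?case
    by (cases rule: root_path.cases) (use root(1) in simp_all)
next
  case (step v ps)
  from step.prems(2) show ?case
  proof (cases rule: root_path.cases)
    case root
    then show ?thesis using step.hyps(1) step.prems(1) by simp
  next
    case (step qs')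
    then show ?thesis using step.IH[OF \<open>r \<notin> N\<close>] by simp
  qed
qed

lemma root_path_subset: "root_path r N par v ps \<Longrightarrow> set ps \<subseteq> N"
  by (induction rule: root_path.induct) auto

lemma root_path_prefix:
  "root_path r N par v (ps @ u # qs) \<Longrightarrow> root_path r N par u (ps @ [u])"
proof (induction "ps @ u # qs" arbitrary: qs rule: root_path.induct)
  case (step v ps')
  show ?case
  proof (cases qs rule: rev_cases)
    case Nil
    then show ?thesis using step.hyps root_path.step by fastforce
  next
    case (snoc qs' z)
    then show ?thesis using step.hyps by simp
  qed
qed simp

lemma root_path_prefix_eq:
  assumes "r \<notin> N" "root_path r N par v (ps @ u # ps')" "root_path r N par w (qs @ u # qs')"
  shows "ps = qs"
  using root_path_unique[OF root_path_prefix[OF assms(2)] assms(1) root_path_prefix[OF assms(3)]]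
  by simp

lemma root_path_distinct:
  assumes "r \<notin> N" "root_path r N par v ps"
  shows "distinct ps"
proof (rule ccontr)
  assume "\<not> distinct ps"
  then obtain xs ys zs u where "ps = xs @ [u] @ ys @ [u] @ zs"
    using not_distinct_decomp by blast
  then have "root_path r N par v (xs @ u # ys @ u # zs)"
    and "root_path r N par v ((xs @ u # ys) @ u # zs)"
    using assms(2) by simp_all
  then have "xs = xs @ u # ys"
    by (rule root_path_prefix_eq[OF assms(1)])
  then show False by simp
qed

lemma root_paths_fork_distinct:
  assumes "r \<notin> N" "root_path r N par v (C @ A)" "root_path r N par w (C @ B)"
    and "A = [] \<or> B = [] \<or> hd A \<noteq> hd B"
  shows "distinct (C @ A @ B)"
proof -
  have "set A \<inter> set B = {}"
  proof (rule ccontr)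
    assume "set A \<inter> set B \<noteq> {}"
    then obtain u where "u \<in> set A" "u \<in> set B"
      by blast
    then obtain A1 A2 B1 B2 where A: "A = A1 @ u # A2" and B: "B = B1 @ u # B2"
      by (meson split_list)
    have "root_path r N par v ((C @ A1) @ u # A2)" "root_path r N par w ((C @ B1) @ u # B2)"
      using assms(2,3) A B by simp_all
    then have "A1 = B1"
      using root_path_prefix_eq[OF assms(1)] by blast
    then show False
      using assms(4) A B by (cases A1) auto
  qed
  then show ?thesis
    using root_path_distinct[OF assms(1,2)] root_path_distinct[OF assms(1,3)] by auto
qed

lemma L_T_root_path:
  assumes "r \<notin> N" "root_path r N par v ps"
  shows "L_T r N par lab v = map lab ps"
proof -
  have "(THE ps. root_path r N par v ps) = ps"
    by (rule the_equality[of "root_path r N par v", OF assms(2)]) (rule root_path_unique[OF _ assms])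
  then show ?thesis
    unfolding L_T_def by simp
qed

lemma rooted_tree_root_path:
  assumes "is_rooted_tree r N par" "v \<in> insert r N"
  shows "\<exists>ps. root_path r N par v ps"
proof (cases "v = r")
  case True
  then show ?thesis using root_path.root[of r N par] by auto
next
  case False
  then show ?thesis using assms unfolding is_rooted_tree_def by blast
qed

lemma rooted_tree_fork:
  assumes "is_rooted_tree r N par" "v \<in> insert r N" "w \<in> insert r N"
  obtains C A B where "L_T r N par lab v = map lab (C @ A)" "L_T r N par lab w = map lab (C @ B)"
    and "length C + length A + length B \<le> card N"
proof -
  have "r \<notin> N" "finite N"
    using assms(1) unfolding is_rooted_tree_def by auto
  obtain P where P: "root_path r N par v P"
    using rooted_tree_root_path[OF assms(1,2)] by blast
  obtain Q where Q: "root_path r N par w Q"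
    using rooted_tree_root_path[OF assms(1,3)] by blast
  obtain C A B where "P = C @ A" "Q = C @ B" and fork: "A = [] \<or> B = [] \<or> hd A \<noteq> hd B"
    using longest_common_prefix[of P Q] by blast
  with P Q have P': "root_path r N par v (C @ A)" and Q': "root_path r N par w (C @ B)"
    by simp_all
  have "length C + length A + length B = card (set (C @ A @ B))"
    using distinct_card[OF root_paths_fork_distinct[OF \<open>r \<notin> N\<close> P' Q' fork]] by simp
  also have "\<dots> \<le> card N"
    using root_path_subset[OF P'] root_path_subset[OF Q'] \<open>finite N\<close> by (intro card_mono) auto
  finally show ?thesis
    using that L_T_root_path[OF \<open>r \<notin> N\<close> P'] L_T_root_path[OF \<open>r \<notin> N\<close> Q'] by blast
qed

theorem lemma10:
  fixes x y :: "('a::finite) list list"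
    and lam :: real
    and r :: 'v and N :: "'v set" and par :: "'v \<Rightarrow> 'v" and lab :: "'v \<Rightarrow> 'a list"
    and vx vy :: 'v
  assumes "lam \<ge> 0"
    and "valid_summary_tree r N par lab vx vy x y"
  shows "EDG x y lam \<le> error_T lam r N par lab vx vy x y"
proof -
  let ?Lx = "L_T r N par lab vx" and ?Ly = "L_T r N par lab vy"
  have tree: "is_rooted_tree r N par" and vx: "vx \<in> insert r N" and vy: "vy \<in> insert r N"
    and "length x \<le> length ?Lx" "length y \<le> length ?Ly"
    using assms(2) unfolding valid_summary_tree_def by auto
  obtain C A B where Lx: "?Lx = map lab (C @ A)" and Ly: "?Ly = map lab (C @ B)"
    and card: "length C + length A + length B \<le> card N"
    using rooted_tree_fork[OF tree vx vy] by blast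
  obtain c1 where c1: "c1 \<le> AED x ?Lx" "align x ?Lx c1"
    using align_le_AED[OF \<open>length x \<le> length ?Lx\<close>] by blast
  obtain c2 where c2: "c2 \<le> AED y ?Ly" "align y ?Ly c2"
    using align_le_AED[OF \<open>length y \<le> length ?Ly\<close>] by blast
  have "EDG x y lam \<le> real c1 + real c2 + lam * real (length C + length A + length B)"
    using edg_le_align_costs[OF assms(1) c1(2)[unfolded Lx map_append] c2(2)[unfolded Ly map_append]]
    unfolding EDG_def by simp
  also have "\<dots> \<le> real (AED x ?Lx) + real (AED y ?Ly) + lam * real (card N)"
    using c1(1) c2(1) card assms(1) by (intro add_mono mult_left_mono) auto
  finally show ?thesis
    unfolding error_T_def .
qed

end
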